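(* Let $G$ be a connected graph on $n\ge 2$ vertices and let $\partial_1(G)$ be the spectral radius (largest eigenvalue) of its distance matrix $D(G)$. Then $\gamma(G)\le \dfrac{n}{\partial_1(G)}$, with equality if and only if $G$ is transmission-regular.
   Context: For a finite simple undirected graph $G$ with $n$ vertices, let $\mathcal{F}=\{x\in\mathbb{R}^{V(G)} : \sum_{v} x_v = 0,\ \|x\|_\infty = 1\}$, for $x\in\mathcal{F}$ let $\gamma_x(G)=\max_{uv\in E(G)}|x_u-x_v|$, and $\gamma(G)=\min_{x\in\mathcal{F}}\gamma_x(G)$. For a connected graph, the distance matrix $D(G)$ has $(u,v)$-entry the shortest-path distance $d(u,v)$; the transmission of $u$ is $\operatorname{tr}(u)=\sum_v d(u,v)$; $G$ is transmission-regular if all vertices have the same transmission. *)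

theory Defs
  imports "HOL-Analysis.Analysis"
begin

definition simple_graph :: "('n::finite \<Rightarrow> 'n \<Rightarrow> bool) \<Rightarrow> bool" where
  "simple_graph E \<longleftrightarrow> (\<forall>u v. E u v \<longrightarrow> E v u) \<and> (\<forall>u. \<not> E u u)"

definition connected_graph :: "('n::finite \<Rightarrow> 'n \<Rightarrow> bool) \<Rightarrow> bool" where
  "connected_graph E \<longleftrightarrow> (\<forall>u v. \<exists>k. (E ^^ k) u v)"

definition gdist :: "('n::finite \<Rightarrow> 'n \<Rightarrow> bool) \<Rightarrow> 'n \<Rightarrow> 'n \<Rightarrow> nat" where
  "gdist E u v = (LEAST k. (E ^^ k) u v)"

definition distance_matrix :: "('n::finite \<Rightarrow> 'n \<Rightarrow> bool) \<Rightarrow> real^'n^'n" where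
  "distance_matrix E = (\<chi> u v. real (gdist E u v))"

definition dist_spectral_radius :: "('n::finite \<Rightarrow> 'n \<Rightarrow> bool) \<Rightarrow> real" where
  "dist_spectral_radius E =
     Max {\<mu>. \<exists>x::real^'n. x \<noteq> 0 \<and> distance_matrix E *v x = \<mu> *\<^sub>R x}"

definition transmission :: "('n::finite \<Rightarrow> 'n \<Rightarrow> bool) \<Rightarrow> 'n \<Rightarrow> nat" where
  "transmission E u = (\<Sum>v\<in>UNIV. gdist E u v)"

definition transmission_regular :: "('n::finite \<Rightarrow> 'n \<Rightarrow> bool) \<Rightarrow> bool" where
  "transmission_regular E \<longleftrightarrow> (\<forall>u v. transmission E u = transmission E v)"

definition sup_norm :: "('n::finite \<Rightarrow> real) \<Rightarrow> real" where
  "sup_norm x = Max (range (\<lambda>v. \<bar>x v\<bar>))"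

definition feasible_vectors :: "('n::finite \<Rightarrow> real) set" where
  "feasible_vectors = {x. (\<Sum>v\<in>UNIV. x v) = 0 \<and> sup_norm x = 1}"

definition gamma_x :: "('n::finite \<Rightarrow> 'n \<Rightarrow> bool) \<Rightarrow> ('n \<Rightarrow> real) \<Rightarrow> real" where
  "gamma_x E x = Max {\<bar>x u - x v\<bar> | u v. E u v}"

text \<open>The minimum over the feasible set (attained by compactness), written as an infimum.\<close>

definition gamma :: "('n::finite \<Rightarrow> 'n \<Rightarrow> bool) \<Rightarrow> real" where
  "gamma E = Inf (gamma_x E ` feasible_vectors)"

end

theory Submission
  imports Defs
begin

text \<open>Let \<open>T\<close> be the largest transmission. Then \<open>\<gamma>(G) = n / T\<close>: a feasible \<open>x\<close> has a
  vertex \<open>u\<close> with \<open>|x u| = 1\<close>, and since \<open>x\<close> is \<open>\<gamma>\<^sub>x(G)\<close>-Lipschitz for the graph distance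
  and sums to \<open>0\<close>, \<open>n = (\<Sum>v. 1 - x u * x v) \<le> \<gamma>\<^sub>x(G) tr(u) \<le> \<gamma>\<^sub>x(G) T\<close>; conversely
  \<open>x v = 1 - (n / T) d(u\<^sub>0, v)\<close>, for \<open>u\<^sub>0\<close> of maximal transmission, is feasible (as
  \<open>n d(u\<^sub>0, v) \<le> tr(u\<^sub>0) + tr(v) \<le> 2 T\<close>) and changes by at most \<open>n / T\<close> along an edge.

  On the spectral side \<open>D(G)\<close> is symmetric and nonnegative with row sums \<open>tr(v)\<close>, so
  \<open>0 < \<partial>\<^sub>1 \<le> T\<close>: the largest eigenvalue of a symmetric matrix maximises the Rayleigh
  quotient, which is positive at the all-ones vector. If \<open>\<partial>\<^sub>1 = T\<close>, the Perron-type argument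
  at a component of maximal modulus of an eigenvector, together with the positivity of the
  off-diagonal entries, forces every row sum to be \<open>T\<close>. Hence \<open>\<gamma>(G) = n / T \<le> n / \<partial>\<^sub>1\<close>,
  with equality iff \<open>\<partial>\<^sub>1 = T\<close> iff \<open>G\<close> is transmission-regular.\<close>

section \<open>Walks and graph distance\<close>

lemma relpowp_symmetric:
  assumes sym: "\<And>a b. E a b \<Longrightarrow> E b a" and "(E ^^ k) a b"
  shows "(E ^^ k) b a"
  using assms(2)
proof (induction k arbitrary: b)
  case 0
  then show ?case by simp
next
  case (Suc k)
  then obtain y where "(E ^^ k) a y" "E y b" by (meson relpowp_Suc_E)
  then show ?case using Suc.IH sym by (meson relpowp_Suc_I2)
qed

lemma lipschitz_along_walk:
  fixes x :: "'a \<Rightarrow> real"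
  assumes "\<And>a b. E a b \<Longrightarrow> \<bar>x a - x b\<bar> \<le> g" and "(E ^^ k) a b"
  shows "\<bar>x a - x b\<bar> \<le> real k * g"
  using assms(2)
proof (induction k arbitrary: b)
  case 0
  then show ?case by simp
next
  case (Suc k)
  then obtain y where "(E ^^ k) a y" "E y b" by (meson relpowp_Suc_E)
  then have "\<bar>x a - x y\<bar> \<le> real k * g" "\<bar>x y - x b\<bar> \<le> g" using Suc.IH assms(1) by auto
  then show ?case by (simp add: algebra_simps)
qed

lemma simple_graph_sym: "simple_graph E \<Longrightarrow> E a b \<Longrightarrow> E b a"
  unfolding simple_graph_def by blast

lemma exists_other_element: "CARD('n::finite) \<ge> 2 \<Longrightarrow> \<exists>v::'n. v \<noteq> u"
  by (metis card_2_iff' ex_card)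

lemma gdist_walk: "connected_graph E \<Longrightarrow> (E ^^ gdist E a b) a b"
  unfolding gdist_def connected_graph_def by (meson LeastI_ex)

lemma gdist_le: "(E ^^ k) a b \<Longrightarrow> gdist E a b \<le> k"
  unfolding gdist_def by (rule Least_le)

lemma gdist_le_1: "E a b \<Longrightarrow> gdist E a b \<le> 1"
  by (rule gdist_le) (simp only: relpowp_1)

lemma gdist_self [simp]: "gdist E a a = 0"
  using gdist_le[OF relpowp_0_I] by simp

lemma gdist_pos:
  assumes "connected_graph E" and "a \<noteq> b"
  shows "0 < gdist E a b"
  using gdist_walk[OF assms(1), of a b] assms(2) by (cases "gdist E a b") auto

lemma gdist_sym:
  assumes "simple_graph E" and "connected_graph E"
  shows "gdist E a b = gdist E b a"
proof -
  have "gdist E b a \<le> gdist E a b" for a b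
    by (rule gdist_le[OF relpowp_symmetric[OF simple_graph_sym[OF assms(1)] gdist_walk[OF assms(2)]]])
  then show ?thesis by (meson antisym)
qed

lemma gdist_triangle:
  assumes "connected_graph E"
  shows "gdist E a c \<le> gdist E a b + gdist E b c"
  by (rule gdist_le[OF relpowp_trans[OF gdist_walk[OF assms] gdist_walk[OF assms]]])

lemma gdist_edge_diff:
  assumes "simple_graph E" and "connected_graph E" and "E b c"
  shows "\<bar>real (gdist E a b) - real (gdist E a c)\<bar> \<le> 1"
proof -
  have "gdist E b c \<le> 1" "gdist E c b \<le> 1"
    using gdist_le_1 assms(3) simple_graph_sym[OF assms(1,3)] by blast+
  then show ?thesis
    using gdist_triangle[OF assms(2), of a b c] gdist_triangle[OF assms(2), of a c b] by linarith
qed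

lemma exists_edge:
  assumes "connected_graph E" and "CARD('n::finite) \<ge> 2"
  shows "\<exists>a b :: 'n. E a b"
proof -
  obtain a b :: 'n where "a \<noteq> b" using exists_other_element[OF assms(2)] by blast
  then obtain k where "(E ^^ Suc k) a b"
    using gdist_pos[OF assms(1)] gdist_walk[OF assms(1)] by (metis gr0_implies_Suc)
  then show ?thesis by (meson relpowp_Suc_E)
qed

section \<open>Transmission\<close>

lemma real_transmission: "real (transmission E u) = (\<Sum>v\<in>UNIV. real (gdist E u v))"
  by (simp add: transmission_def)

lemma transmission_pos:
  assumes "connected_graph E" and "CARD('n::finite) \<ge> 2"
  shows "0 < transmission E (u::'n)"
proof -
  obtain v where "v \<noteq> u" using exists_other_element[OF assms(2)] by blast
  then have "0 < gdist E u v" using gdist_pos[OF assms(1)] by metis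
  also have "gdist E u v \<le> transmission E u"
    unfolding transmission_def by (rule member_le_sum) auto
  finally show ?thesis .
qed

lemma card_mult_gdist_le_transmission:
  fixes E :: "'n::finite \<Rightarrow> 'n \<Rightarrow> bool"
  assumes "simple_graph E" and "connected_graph E"
  shows "CARD('n) * gdist E u v \<le> transmission E u + transmission E v"
proof -
  have "(\<Sum>w\<in>(UNIV::'n set). gdist E u v) \<le> (\<Sum>w\<in>UNIV. gdist E u w + gdist E v w)"
    by (rule sum_mono) (metis gdist_triangle gdist_sym assms)
  then show ?thesis by (simp add: transmission_def sum.distrib)
qed

definition max_transmission :: "('n::finite \<Rightarrow> 'n \<Rightarrow> bool) \<Rightarrow> nat" where
  "max_transmission E = Max (range (transmission E))"

lemma transmission_le_max_transmission: "transmission E u \<le> max_transmission E"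
  unfolding max_transmission_def by (rule Max_ge) auto

lemma max_transmission_attained:
  obtains u where "transmission E u = max_transmission E"
proof -
  have "max_transmission E \<in> range (transmission E)"
    unfolding max_transmission_def by (rule Max_in) auto
  then show ?thesis using that by (metis rangeE)
qed

lemma max_transmission_pos:
  "connected_graph E \<Longrightarrow> CARD('n::finite) \<ge> 2 \<Longrightarrow> 0 < max_transmission (E :: 'n \<Rightarrow> _)"
  by (metis max_transmission_attained transmission_pos)

section \<open>The parameter \<open>\<gamma>\<close>\<close>

lemma finite_edge_differences:
  fixes x :: "'n::finite \<Rightarrow> real"
  shows "finite {\<bar>x u - x v\<bar> | u v. E u v}"
proof -
  have "{\<bar>x u - x v\<bar> | u v. E u v} \<subseteq> (\<lambda>(u, v). \<bar>x u - x v\<bar>) ` UNIV" by auto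
  then show ?thesis by (rule finite_subset) simp
qed

lemma gamma_x_ge: "E a b \<Longrightarrow> \<bar>x a - x b\<bar> \<le> gamma_x E x"
  unfolding gamma_x_def by (rule Max_ge[OF finite_edge_differences]) blast

lemma gamma_x_le:
  assumes "\<exists>a b. E a b" and "\<And>a b. E a b \<Longrightarrow> \<bar>x a - x b\<bar> \<le> c"
  shows "gamma_x E x \<le> c"
  unfolding gamma_x_def using assms by (intro Max.boundedI[OF finite_edge_differences]) auto

lemma gamma_x_nonneg: "\<exists>a b. E a b \<Longrightarrow> 0 \<le> gamma_x E x"
  by (meson abs_ge_zero gamma_x_ge order_trans)

lemma lipschitz_gdist:
  "connected_graph E \<Longrightarrow> \<bar>x a - x b\<bar> \<le> real (gdist E a b) * gamma_x E x"
  by (rule lipschitz_along_walk[OF gamma_x_ge gdist_walk])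

lemma feasible_vectorE:
  assumes "x \<in> feasible_vectors"
  obtains u where "\<bar>x u\<bar> = 1" and "(\<Sum>v\<in>UNIV. x v) = 0"
proof -
  have "sup_norm x \<in> range (\<lambda>v. \<bar>x v\<bar>)" unfolding sup_norm_def by (rule Max_in) auto
  then show ?thesis using assms that by (auto simp: feasible_vectors_def)
qed

lemma card_le_gamma_x_mult_transmission:
  fixes E :: "'n::finite \<Rightarrow> 'n \<Rightarrow> bool"
  assumes "connected_graph E" and "\<bar>x u\<bar> = 1" and "(\<Sum>v\<in>UNIV. x v) = 0"
  shows "real CARD('n) \<le> gamma_x E x * real (transmission E u)"
proof -
  have "x u * x u = 1" using assms(2) by (metis abs_mult_self_eq mult_1_right)
  have "real CARD('n) = (\<Sum>v\<in>UNIV. 1 - x u * x v)"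
    using assms(3) by (simp add: sum_subtractf sum_distrib_left[symmetric])
  also have "\<dots> \<le> (\<Sum>v\<in>UNIV. \<bar>x u - x v\<bar>)"
  proof (rule sum_mono)
    fix v
    have "1 - x u * x v = x u * (x u - x v)" using \<open>x u * x u = 1\<close> by (simp add: algebra_simps)
    also have "\<dots> \<le> \<bar>x u - x v\<bar>" using assms(2) by (metis abs_ge_self abs_mult mult_1)
    finally show "1 - x u * x v \<le> \<bar>x u - x v\<bar>" .
  qed
  also have "\<dots> \<le> (\<Sum>v\<in>UNIV. real (gdist E u v) * gamma_x E x)"
    by (rule sum_mono) (rule lipschitz_gdist[OF assms(1)])
  also have "\<dots> = gamma_x E x * real (transmission E u)"
    by (simp add: real_transmission sum_distrib_left mult.commute)
  finally show ?thesis .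
qed

lemma gamma_x_lower_bound:
  fixes E :: "'n::finite \<Rightarrow> 'n \<Rightarrow> bool"
  assumes "connected_graph E" and "CARD('n) \<ge> 2" and "x \<in> feasible_vectors"
  shows "real CARD('n) / real (max_transmission E) \<le> gamma_x E x"
proof -
  obtain u where u: "\<bar>x u\<bar> = 1" "(\<Sum>v\<in>UNIV. x v) = 0" using assms(3) by (rule feasible_vectorE)
  have "real CARD('n) \<le> gamma_x E x * real (transmission E u)"
    by (rule card_le_gamma_x_mult_transmission[OF assms(1) u])
  also have "\<dots> \<le> gamma_x E x * real (max_transmission E)"
    by (intro mult_left_mono gamma_x_nonneg[OF exists_edge[OF assms(1,2)]])
      (simp add: transmission_le_max_transmission)
  finally show ?thesis
    using max_transmission_pos[OF assms(1,2)] by (simp add: divide_le_eq)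
qed

lemma gamma_x_distance_profile_le:
  assumes "simple_graph E" and "connected_graph E" and "\<exists>a b. E a b" and "0 \<le> c"
  shows "gamma_x E (\<lambda>v. 1 - c * real (gdist E u v)) \<le> c"
proof (rule gamma_x_le[OF assms(3)])
  fix a b
  assume "E a b"
  then have "c * \<bar>real (gdist E u a) - real (gdist E u b)\<bar> \<le> c"
    using gdist_edge_diff[OF assms(1,2)] assms(4) by (simp add: mult_left_le)
  then show "\<bar>(1 - c * real (gdist E u a)) - (1 - c * real (gdist E u b))\<bar> \<le> c"
    using assms(4) by (simp add: abs_mult abs_minus_commute right_diff_distrib[symmetric])
qed

lemma distance_profile_feasible:
  fixes E :: "'n::finite \<Rightarrow> 'n \<Rightarrow> bool"
  assumes "simple_graph E" and "connected_graph E" and "CARD('n) \<ge> 2"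
    and u: "transmission E u = max_transmission E"
  defines "c \<equiv> real CARD('n) / real (max_transmission E)"
  shows "(\<lambda>v. 1 - c * real (gdist E u v)) \<in> feasible_vectors"
proof -
  define T where "T = real (max_transmission E)"
  have "0 < T" unfolding T_def using max_transmission_pos[OF assms(2,3)] by simp
  have c_eq: "c = real CARD('n) / T" by (simp add: c_def T_def)
  have "(\<Sum>v\<in>UNIV. c * real (gdist E u v)) = c * T"
    by (simp add: T_def u[symmetric] real_transmission sum_distrib_left)
  also have "\<dots> = real CARD('n)" using \<open>0 < T\<close> by (simp add: c_eq)
  finally have sum0: "(\<Sum>v\<in>UNIV. 1 - c * real (gdist E u v)) = 0"
    by (simp add: sum_subtractf)
  have bounded: "\<bar>1 - c * real (gdist E u v)\<bar> \<le> 1" for v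
  proof -
    have "CARD('n) * gdist E u v \<le> 2 * max_transmission E"
      using card_mult_gdist_le_transmission[OF assms(1,2), of u v]
        transmission_le_max_transmission[of E v] u by linarith
    then have "real (CARD('n) * gdist E u v) \<le> real (2 * max_transmission E)"
      by (rule of_nat_mono)
    then have "real CARD('n) * real (gdist E u v) \<le> 2 * T" by (simp add: T_def)
    then have "c * real (gdist E u v) \<le> 2"
      using \<open>0 < T\<close> by (simp add: c_eq pos_divide_le_eq)
    moreover have "0 \<le> c * real (gdist E u v)" by (simp add: c_def)
    ultimately show ?thesis by simp
  qed
  have "1 \<in> range (\<lambda>v. \<bar>1 - c * real (gdist E u v)\<bar>)"
    by (rule range_eqI[of _ _ u]) simp
  then have "sup_norm (\<lambda>v. 1 - c * real (gdist E u v)) = 1"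
    unfolding sup_norm_def using bounded by (intro Max_eqI) auto
  with sum0 show ?thesis by (simp add: feasible_vectors_def)
qed

lemma gamma_eq_card_div_max_transmission:
  fixes E :: "'n::finite \<Rightarrow> 'n \<Rightarrow> bool"
  assumes "simple_graph E" and "connected_graph E" and "CARD('n) \<ge> 2"
  shows "gamma E = real CARD('n) / real (max_transmission E)"
proof -
  define c where "c = real CARD('n) / real (max_transmission E)"
  obtain u where u: "transmission E u = max_transmission E" by (rule max_transmission_attained)
  define x where "x = (\<lambda>v. 1 - c * real (gdist E u v))"
  have x: "x \<in> feasible_vectors"
    unfolding x_def c_def by (rule distance_profile_feasible[OF assms u])
  have "gamma_x E x \<le> c"
    unfolding x_def by (rule gamma_x_distance_profile_le[OF assms(1,2) exists_edge[OF assms(2,3)]])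
      (simp add: c_def)
  moreover have "c \<le> gamma_x E x"
    unfolding c_def by (rule gamma_x_lower_bound[OF assms(2,3) x])
  ultimately have "gamma_x E x = c" by simp
  then have "c \<in> gamma_x E ` feasible_vectors" using x by (metis image_eqI)
  moreover have "c \<le> g" if "g \<in> gamma_x E ` feasible_vectors" for g
    using that gamma_x_lower_bound[OF assms(2,3)] unfolding c_def by blast
  ultimately have "Inf (gamma_x E ` feasible_vectors) = c" by (rule cInf_eq_minimum)
  then show ?thesis by (simp add: gamma_def c_def)
qed

section \<open>Symmetric and nonnegative matrices\<close>

definition eigenvalues :: "real^'n^'n \<Rightarrow> real set" where
  "eigenvalues A = {\<mu>. \<exists>x. x \<noteq> 0 \<and> A *v x = \<mu> *\<^sub>R x}"

lemma inner_matrix_vector_mult_symmetric: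
  fixes A :: "real^'n^'n"
  assumes "transpose A = A"
  shows "(A *v y) \<bullet> z = y \<bullet> (A *v z)"
  using dot_lmul_matrix[of y A z] transpose_matrix_vector[of A y] assms by simp

lemma symmetric_finite_eigenvalues:
  fixes A :: "real^'n^'n"
  assumes sym: "transpose A = A"
  shows "finite (eigenvalues A)"
proof -
  define v where "v \<mu> = (SOME x. x \<noteq> 0 \<and> A *v x = \<mu> *\<^sub>R x)" for \<mu>
  have v: "v \<mu> \<noteq> 0" "A *v v \<mu> = \<mu> *\<^sub>R v \<mu>" if "\<mu> \<in> eigenvalues A" for \<mu>
    using someI_ex[of "\<lambda>x. x \<noteq> 0 \<and> A *v x = \<mu> *\<^sub>R x"] that
    unfolding v_def eigenvalues_def by auto
  have "inj_on v (eigenvalues A)"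
  proof (rule inj_onI)
    fix a b
    assume "a \<in> eigenvalues A" "b \<in> eigenvalues A" "v a = v b"
    then have "a *\<^sub>R v a = b *\<^sub>R v a" using v by metis
    then show "a = b" using v(1)[OF \<open>a \<in> eigenvalues A\<close>] by simp
  qed
  moreover have "pairwise orthogonal (v ` eigenvalues A)"
  proof (rule pairwiseI, safe)
    fix a b
    assume a: "a \<in> eigenvalues A" and b: "b \<in> eigenvalues A" and "v a \<noteq> v b"
    then have "a \<noteq> b" by blast
    have "a * (v a \<bullet> v b) = (A *v v a) \<bullet> v b" using v(2)[OF a] by simp
    also have "\<dots> = v a \<bullet> (A *v v b)" by (rule inner_matrix_vector_mult_symmetric[OF sym])
    also have "\<dots> = b * (v a \<bullet> v b)" using v(2)[OF b] by simp
    finally show "orthogonal (v a) (v b)"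
      using \<open>a \<noteq> b\<close> by (simp add: orthogonal_def)
  qed
  then have "finite (v ` eigenvalues A)" by (rule pairwise_orthogonal_imp_finite)
  ultimately show ?thesis using finite_imageD by blast
qed

lemma quadratic_nonneg_imp_linear_coeff_zero:
  fixes a b :: real
  assumes nonneg: "\<And>t. 0 \<le> 2 * t * a + t\<^sup>2 * b" and "0 \<le> b"
  shows "a = 0"
proof (rule ccontr)
  assume "a \<noteq> 0"
  define t where "t = - a / (b + 1)"
  have a_eq: "a = - t * (b + 1)" using \<open>0 \<le> b\<close> by (simp add: t_def)
  then have "t \<noteq> 0" using \<open>a \<noteq> 0\<close> by auto
  have "0 \<le> 2 * t * a + t\<^sup>2 * b" by (rule nonneg)
  also have "\<dots> = t\<^sup>2 * (- b - 2)" unfolding a_eq by (simp add: power2_eq_square algebra_simps)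
  also have "\<dots> < 0" using \<open>t \<noteq> 0\<close> \<open>0 \<le> b\<close> by (intro mult_pos_neg) auto
  finally show False by simp
qed

lemma rayleigh_maximizer_eigenvector:
  fixes A :: "real^'n^'n"
  assumes sym: "transpose A = A"
    and le: "\<And>y. y \<bullet> (A *v y) \<le> l * (norm y)\<^sup>2"
    and eq: "x \<bullet> (A *v x) = l * (norm x)\<^sup>2"
  shows "A *v x = l *\<^sub>R x"
proof -
  define q where "q y = l * (norm y)\<^sup>2 - y \<bullet> (A *v y)" for y
  define r where "r = l *\<^sub>R x - A *v x"
  have q_nonneg: "0 \<le> q y" for y using le[of y] by (simp add: q_def)
  \<comment> \<open>\<open>q\<close> is a nonnegative quadratic form vanishing at \<open>x\<close>, so its linear term along \<open>r\<close> must vanish\<close>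
  have "x \<bullet> (A *v r) = (A *v x) \<bullet> r" by (simp add: inner_matrix_vector_mult_symmetric[OF sym])
  then have "q (x + t *\<^sub>R r) = q x + 2 * t * (l * (x \<bullet> r) - (A *v x) \<bullet> r) + t\<^sup>2 * q r" for t
    unfolding q_def power2_norm_eq_inner
    by (simp add: matrix_vector_right_distrib matrix_vector_mult_scaleR inner_add_left
        inner_add_right inner_commute power2_eq_square algebra_simps)
  moreover have "l * (x \<bullet> r) - (A *v x) \<bullet> r = r \<bullet> r"
    by (simp add: r_def inner_diff_left inner_commute)
  ultimately have "q (x + t *\<^sub>R r) = q x + 2 * t * (r \<bullet> r) + t\<^sup>2 * q r" for t
    by simp
  then have "0 \<le> 2 * t * (r \<bullet> r) + t\<^sup>2 * q r" for t
    using q_nonneg[of "x + t *\<^sub>R r"] eq by (simp add: q_def)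
  then have "r \<bullet> r = 0" using q_nonneg by (rule quadratic_nonneg_imp_linear_coeff_zero)
  then show ?thesis by (simp add: r_def)
qed

lemma symmetric_rayleigh_bound_eigenvalue:
  fixes A :: "real^'n^'n"
  assumes sym: "transpose A = A"
  obtains l where "l \<in> eigenvalues A" and "\<And>y. y \<bullet> (A *v y) \<le> l * (norm y)\<^sup>2"
proof -
  have "continuous_on (sphere 0 1) (\<lambda>y. y \<bullet> (A *v y))"
    by (intro continuous_intros matrix_vector_mult_linear_continuous_on)
  moreover have "sphere (0::real^'n) 1 \<noteq> {}" by simp
  ultimately obtain x where x: "x \<in> sphere 0 1"
    and max: "\<And>y. y \<in> sphere 0 1 \<Longrightarrow> y \<bullet> (A *v y) \<le> x \<bullet> (A *v x)"
    using continuous_attains_sup[OF compact_sphere] by blast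
  define l where "l = x \<bullet> (A *v x)"
  have bound: "y \<bullet> (A *v y) \<le> l * (norm y)\<^sup>2" for y
  proof (cases "y = 0")
    case False
    then have "0 < norm y" by simp
    have "(y /\<^sub>R norm y) \<bullet> (A *v (y /\<^sub>R norm y)) \<le> l"
      unfolding l_def using \<open>0 < norm y\<close> by (intro max) simp
    moreover have "(y /\<^sub>R norm y) \<bullet> (A *v (y /\<^sub>R norm y)) = y \<bullet> (A *v y) / (norm y)\<^sup>2"
      by (simp add: matrix_vector_mult_scaleR power2_eq_square divide_inverse ac_simps)
    ultimately show ?thesis using \<open>0 < norm y\<close> by (simp add: divide_le_eq)
  qed simp
  have "norm x = 1" using x by simp
  then have "A *v x = l *\<^sub>R x"
    by (intro rayleigh_maximizer_eigenvector[OF sym bound]) (simp add: l_def)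
  moreover have "x \<noteq> 0" using \<open>norm x = 1\<close> by auto
  ultimately have "l \<in> eigenvalues A" unfolding eigenvalues_def by blast
  then show ?thesis using bound by (rule that)
qed

lemma symmetric_Max_eigenvalues:
  fixes A :: "real^'n^'n"
  assumes sym: "transpose A = A"
  shows "Max (eigenvalues A) \<in> eigenvalues A"
    and "\<mu> \<in> eigenvalues A \<Longrightarrow> \<mu> \<le> Max (eigenvalues A)"
    and "y \<bullet> (A *v y) \<le> Max (eigenvalues A) * (norm y)\<^sup>2"
proof -
  obtain l where l: "l \<in> eigenvalues A" and bound: "\<And>y. y \<bullet> (A *v y) \<le> l * (norm y)\<^sup>2"
    using symmetric_rayleigh_bound_eigenvalue[OF sym] by blast
  have fin: "finite (eigenvalues A)" by (rule symmetric_finite_eigenvalues[OF sym])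
  with l show "Max (eigenvalues A) \<in> eigenvalues A" by (intro Max_in) auto
  from fin show le: "\<mu> \<le> Max (eigenvalues A)" if "\<mu> \<in> eigenvalues A" for \<mu>
    using that by (rule Max_ge)
  have "l * (norm y)\<^sup>2 \<le> Max (eigenvalues A) * (norm y)\<^sup>2"
    by (intro mult_right_mono le[OF l]) simp
  with bound[of y] show "y \<bullet> (A *v y) \<le> Max (eigenvalues A) * (norm y)\<^sup>2" by linarith
qed

lemma max_abs_component:
  fixes y :: "real^'n"
  assumes "y \<noteq> 0"
  obtains w where "\<And>v. \<bar>y$v\<bar> \<le> \<bar>y$w\<bar>" and "0 < \<bar>y$w\<bar>"
proof -
  have "Max (range (\<lambda>v. \<bar>y$v\<bar>)) \<in> range (\<lambda>v. \<bar>y$v\<bar>)" by (rule Max_in) auto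
  then obtain w where w: "Max (range (\<lambda>v. \<bar>y$v\<bar>)) = \<bar>y$w\<bar>" by blast
  have max: "\<bar>y$v\<bar> \<le> \<bar>y$w\<bar>" for v unfolding w[symmetric] by (rule Max_ge) auto
  obtain i where "y$i \<noteq> 0" using assms by (auto simp: vec_eq_iff)
  then have "0 < \<bar>y$w\<bar>" using max[of i] by linarith
  with max show ?thesis by (rule that)
qed

lemma abs_eigenvalue_mult_le_row:
  fixes A :: "real^'n^'n"
  assumes nonneg: "\<And>i j. 0 \<le> A$i$j" and eig: "A *v y = \<mu> *\<^sub>R y"
  shows "\<bar>\<mu>\<bar> * \<bar>y$i\<bar> \<le> (\<Sum>j\<in>UNIV. A$i$j * \<bar>y$j\<bar>)"
proof -
  have "\<mu> * y$i = (\<Sum>j\<in>UNIV. A$i$j * y$j)"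
    using arg_cong[OF eig, of "\<lambda>z. z$i"] by (simp add: matrix_vector_mult_def)
  then have "\<bar>\<mu>\<bar> * \<bar>y$i\<bar> = \<bar>\<Sum>j\<in>UNIV. A$i$j * y$j\<bar>" by (simp add: abs_mult[symmetric])
  also have "\<dots> \<le> (\<Sum>j\<in>UNIV. \<bar>A$i$j * y$j\<bar>)" by (rule sum_abs)
  also have "\<dots> = (\<Sum>j\<in>UNIV. A$i$j * \<bar>y$j\<bar>)" using nonneg by (simp add: abs_mult)
  finally show ?thesis .
qed

lemma abs_eigenvalue_le_row_sum_bound:
  fixes A :: "real^'n^'n"
  assumes nonneg: "\<And>i j. 0 \<le> A$i$j" and rows: "\<And>i. (\<Sum>j\<in>UNIV. A$i$j) \<le> r"
    and eig: "A *v y = \<mu> *\<^sub>R y" and "y \<noteq> 0"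
  shows "\<bar>\<mu>\<bar> \<le> r"
proof -
  obtain w where max: "\<And>v. \<bar>y$v\<bar> \<le> \<bar>y$w\<bar>" and pos: "0 < \<bar>y$w\<bar>"
    using max_abs_component[OF \<open>y \<noteq> 0\<close>] by blast
  have "\<bar>\<mu>\<bar> * \<bar>y$w\<bar> \<le> (\<Sum>j\<in>UNIV. A$w$j * \<bar>y$j\<bar>)"
    by (rule abs_eigenvalue_mult_le_row[OF nonneg eig])
  also have "\<dots> \<le> (\<Sum>j\<in>UNIV. A$w$j * \<bar>y$w\<bar>)"
    by (intro sum_mono mult_left_mono max nonneg)
  also have "\<dots> \<le> r * \<bar>y$w\<bar>"
    using rows[of w] pos by (simp add: sum_distrib_right[symmetric])
  finally show ?thesis using pos by simp
qed

text \<open>At a component of maximal modulus all inequalities in the proof of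
  \<open>abs_eigenvalue_le_row_sum_bound\<close> are tight; positive off-diagonal entries then
  propagate the maximal modulus to every component.\<close>

lemma eigenvector_abs_const:
  fixes A :: "real^'n^'n"
  assumes nonneg: "\<And>i j. 0 \<le> A$i$j" and pos: "\<And>i j. i \<noteq> j \<Longrightarrow> 0 < A$i$j"
    and rows: "\<And>i. (\<Sum>j\<in>UNIV. A$i$j) \<le> r"
    and eig: "A *v y = r *\<^sub>R y" and "y \<noteq> 0"
  obtains M where "0 < M" and "\<And>v. \<bar>y$v\<bar> = M"
proof -
  obtain w where max: "\<And>v. \<bar>y$v\<bar> \<le> \<bar>y$w\<bar>" and "0 < \<bar>y$w\<bar>"
    using max_abs_component[OF \<open>y \<noteq> 0\<close>] by blast
  define M where "M = \<bar>y$w\<bar>"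
  have "r * M \<le> \<bar>r\<bar> * M" using \<open>0 < \<bar>y$w\<bar>\<close> by (intro mult_right_mono) (auto simp: M_def)
  also have "\<dots> \<le> (\<Sum>j\<in>UNIV. A$w$j * \<bar>y$j\<bar>)"
    unfolding M_def by (rule abs_eigenvalue_mult_le_row[OF nonneg eig])
  moreover have "(\<Sum>j\<in>UNIV. A$w$j * M) \<le> r * M"
    using rows[of w] \<open>0 < \<bar>y$w\<bar>\<close> by (simp add: M_def sum_distrib_right[symmetric])
  ultimately have "(\<Sum>j\<in>UNIV. A$w$j * (M - \<bar>y$j\<bar>)) \<le> 0"
    by (simp add: right_diff_distrib sum_subtractf)
  moreover have nonneg_terms: "0 \<le> A$w$j * (M - \<bar>y$j\<bar>)" for j
    using max nonneg by (simp add: M_def)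
  moreover have "0 \<le> (\<Sum>j\<in>UNIV. A$w$j * (M - \<bar>y$j\<bar>))"
    by (rule sum_nonneg) (rule nonneg_terms)
  ultimately have "(\<Sum>j\<in>UNIV. A$w$j * (M - \<bar>y$j\<bar>)) = 0" by linarith
  then have zero_terms: "A$w$j * (M - \<bar>y$j\<bar>) = 0" for j
    using nonneg_terms by (simp add: sum_nonneg_eq_0_iff)
  have const: "\<bar>y$v\<bar> = M" for v
  proof (cases "v = w")
    case False
    then have "0 < A$w$v" using pos[of w v] by simp
    with zero_terms[of v] show ?thesis by simp
  qed (simp add: M_def)
  have "0 < M" using \<open>0 < \<bar>y$w\<bar>\<close> by (simp add: M_def)
  then show ?thesis using const by (rule that)
qed

lemma row_sums_eq_if_row_sum_bound_eigenvalue: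
  fixes A :: "real^'n^'n"
  assumes nonneg: "\<And>i j. 0 \<le> A$i$j" and pos: "\<And>i j. i \<noteq> j \<Longrightarrow> 0 < A$i$j"
    and rows: "\<And>i. (\<Sum>j\<in>UNIV. A$i$j) \<le> r"
    and eig: "A *v y = r *\<^sub>R y" and "y \<noteq> 0"
  shows "(\<Sum>j\<in>UNIV. A$i$j) = r"
proof -
  obtain M where "0 < M" and const: "\<And>v. \<bar>y$v\<bar> = M"
    using eigenvector_abs_const[OF assms] by blast
  have "r * M \<le> \<bar>r\<bar> * \<bar>y$i\<bar>" using const \<open>0 < M\<close> by (simp add: mult_right_mono)
  also have "\<dots> \<le> (\<Sum>j\<in>UNIV. A$i$j * \<bar>y$j\<bar>)" by (rule abs_eigenvalue_mult_le_row[OF nonneg eig])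
  also have "\<dots> = (\<Sum>j\<in>UNIV. A$i$j) * M" by (simp add: const sum_distrib_right)
  finally have "r \<le> (\<Sum>j\<in>UNIV. A$i$j)" using \<open>0 < M\<close> by simp
  with rows[of i] show ?thesis by simp
qed

section \<open>The distance spectral radius\<close>

lemma distance_matrix_nonneg: "0 \<le> distance_matrix E $ i $ j"
  by (simp add: distance_matrix_def)

lemma distance_matrix_off_diagonal_pos:
  "connected_graph E \<Longrightarrow> i \<noteq> j \<Longrightarrow> 0 < distance_matrix E $ i $ j"
  by (simp add: distance_matrix_def gdist_pos)

lemma distance_matrix_row_sum:
  "(\<Sum>j\<in>UNIV. distance_matrix E $ i $ j) = real (transmission E i)"
  by (simp add: distance_matrix_def real_transmission)

lemma transpose_distance_matrix:
  "simple_graph E \<Longrightarrow> connected_graph E \<Longrightarrow> transpose (distance_matrix E) = distance_matrix E"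
  by (simp add: transpose_def distance_matrix_def vec_eq_iff gdist_sym)

lemma dist_spectral_radius_eigenvalue:
  assumes "simple_graph E" and "connected_graph E"
  shows "dist_spectral_radius E \<in> eigenvalues (distance_matrix E)"
  unfolding dist_spectral_radius_def eigenvalues_def[symmetric]
  by (rule symmetric_Max_eigenvalues(1)[OF transpose_distance_matrix[OF assms]])

lemma dist_spectral_radius_le_max_transmission:
  assumes "simple_graph E" and "connected_graph E"
  shows "dist_spectral_radius E \<le> real (max_transmission E)"
proof -
  obtain y where "y \<noteq> 0" and "distance_matrix E *v y = dist_spectral_radius E *\<^sub>R y"
    using dist_spectral_radius_eigenvalue[OF assms] unfolding eigenvalues_def by blast
  then have "\<bar>dist_spectral_radius E\<bar> \<le> real (max_transmission E)"
    by (intro abs_eigenvalue_le_row_sum_bound[OF distance_matrix_nonneg])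
      (simp_all add: distance_matrix_row_sum transmission_le_max_transmission)
  then show ?thesis by simp
qed

lemma dist_spectral_radius_pos:
  fixes E :: "'n::finite \<Rightarrow> 'n \<Rightarrow> bool"
  assumes "simple_graph E" and "connected_graph E" and "CARD('n) \<ge> 2"
  shows "0 < dist_spectral_radius E"
proof -
  define one :: "real^'n" where "one = (\<chi> i. 1)"
  have "0 < (\<Sum>u\<in>UNIV. real (transmission E u))"
    using transmission_pos[OF assms(2,3)] by (intro sum_pos) auto
  also have "\<dots> = one \<bullet> (distance_matrix E *v one)"
    by (simp add: one_def inner_vec_def matrix_vector_mult_def distance_matrix_row_sum)
  also have "\<dots> \<le> dist_spectral_radius E * (norm one)\<^sup>2"
    unfolding dist_spectral_radius_def eigenvalues_def[symmetric]
    by (rule symmetric_Max_eigenvalues(3)[OF transpose_distance_matrix[OF assms(1,2)]])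
  finally show ?thesis by (simp add: zero_less_mult_iff)
qed

lemma dist_spectral_radius_eq_max_transmission_iff:
  assumes "simple_graph E" and "connected_graph E"
  shows "dist_spectral_radius E = real (max_transmission E) \<longleftrightarrow> transmission_regular E"
proof
  assume eq: "dist_spectral_radius E = real (max_transmission E)"
  obtain y where y: "y \<noteq> 0" "distance_matrix E *v y = real (max_transmission E) *\<^sub>R y"
    using dist_spectral_radius_eigenvalue[OF assms] unfolding eq eigenvalues_def by blast
  have rows: "(\<Sum>j\<in>UNIV. distance_matrix E $ i $ j) \<le> real (max_transmission E)" for i
    by (simp add: distance_matrix_row_sum transmission_le_max_transmission)
  have "(\<Sum>j\<in>UNIV. distance_matrix E $ u $ j) = real (max_transmission E)" for u
    by (rule row_sums_eq_if_row_sum_bound_eigenvalue[OF distance_matrix_nonneg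
          distance_matrix_off_diagonal_pos[OF assms(2)] rows y(2,1)])
  then have "transmission E u = max_transmission E" for u
    by (simp add: distance_matrix_row_sum)
  then show "transmission_regular E" by (simp add: transmission_regular_def)
next
  assume "transmission_regular E"
  then have "transmission E u = max_transmission E" for u
    by (metis max_transmission_attained transmission_regular_def)
  then have "distance_matrix E *v (\<chi> i. 1) = real (max_transmission E) *\<^sub>R (\<chi> i. 1)"
    by (simp add: vec_eq_iff matrix_vector_mult_def distance_matrix_row_sum)
  moreover have "(\<chi> i. 1) \<noteq> (0 :: real^_)" by (simp add: vec_eq_iff)
  ultimately have "real (max_transmission E) \<in> eigenvalues (distance_matrix E)"
    unfolding eigenvalues_def by blast
  then have "real (max_transmission E) \<le> dist_spectral_radius E"
    unfolding dist_spectral_radius_def eigenvalues_def[symmetric]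
    by (rule symmetric_Max_eigenvalues(2)[OF transpose_distance_matrix[OF assms]])
  with dist_spectral_radius_le_max_transmission[OF assms]
  show "dist_spectral_radius E = real (max_transmission E)" by simp
qed

theorem theorem4p1:
  fixes E :: "'n::finite \<Rightarrow> 'n \<Rightarrow> bool"
  assumes "simple_graph E" and "connected_graph E" and "CARD('n) \<ge> 2"
  shows "gamma E \<le> real CARD('n) / dist_spectral_radius E
         \<and> (gamma E = real CARD('n) / dist_spectral_radius E \<longleftrightarrow> transmission_regular E)"
proof -
  let ?T = "real (max_transmission E)" and ?\<rho> = "dist_spectral_radius E"
  have gamma: "gamma E = real CARD('n) / ?T"
    by (rule gamma_eq_card_div_max_transmission[OF assms])
  have "0 < ?\<rho>" by (rule dist_spectral_radius_pos[OF assms])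
  moreover have "?\<rho> \<le> ?T" by (rule dist_spectral_radius_le_max_transmission[OF assms(1,2)])
  ultimately have "real CARD('n) / ?T \<le> real CARD('n) / ?\<rho>" by (intro frac_le) auto
  moreover have "real CARD('n) / ?T = real CARD('n) / ?\<rho> \<longleftrightarrow> ?\<rho> = ?T"
    using assms(3) by (auto simp: divide_cancel_left)
  ultimately show ?thesis
    using gamma dist_spectral_radius_eq_max_transmission_iff[OF assms(1,2)] by auto
qed

end
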